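(* Consider a planar motion of oriented m-triangles in the $xy$-plane with normal vector $\mathbf k$ and angular momentum $\mathbf\Omega=\Omega\mathbf k$, and let $\omega_i=\dot\phi_i$ be the scalar angular velocity of the position vector $\mathbf a_i$ (where $\phi_i$ is its polar angle in the plane). Then, at nondegenerate configurations, $$\omega_i=\omega_i^0+\frac{\Omega}{I},\qquad i=1,2,3,$$ where (with indices mod $3$) $$\omega_1^0=\frac1I\big(I_3\dot\alpha_2-I_2\dot\alpha_3\big)=\frac{1}{8m_1m_2m_3\Delta I}\Big[(C_3I_3-C_2I_2)\frac{\dot I_1}{I_1}-(C_1+2m_2I_3)\dot I_2+(C_1+2m_3I_2)\dot I_3\Big],$$ and $\omega_2^0,\omega_3^0$ are obtained by cyclic permutation of the indices.
   Context: Masses $m_1,m_2,m_3>0$, $m_1+m_2+m_3=1$; position vectors $\mathbf a_i$ with $\sum m_i\mathbf a_i=0$ (center of mass at the origin $O$), vertices $P_i$ with $\mathbf a_i=\overrightarrow{OP_i}$. $I_i=m_i|\mathbf a_i|^2$, $I=I_1+I_2+I_3$. $\alpha_j$ is the central angle at $O$ opposite to the vertex $P_j$ (the angle between $\mathbf a_{j+1}$ and $\mathbf a_{j+2}$), so $\alpha_1+\alpha_2+\alpha_3=2\pi$. $\Delta$ is the area of the triangle $P_1P_2P_3$. $C_1=-m_1I_1+m_2I_2+m_3I_3$, and $C_2,C_3$ by cyclic permutation. The angular momentum is $\mathbf\Omega=\sum m_i\mathbf a_i\times\dot{\mathbf a}_i$. *)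

theory Defs
  imports "HOL-Analysis.Analysis"
begin

text \<open>Planar vectors are elements of real^2; the vertices are indexed by 1,2,3
  (indices taken mod 3 via nx).\<close>

definition nx :: "nat \<Rightarrow> nat" where
  "nx i = i mod 3 + 1"

definition cross2 :: "real^2 \<Rightarrow> real^2 \<Rightarrow> real" where
  "cross2 u v = u$1 * v$2 - u$2 * v$1"

definition vang :: "real^2 \<Rightarrow> real^2 \<Rightarrow> real" where
  "vang u v = arccos ((u \<bullet> v) / (norm u * norm v))"

definition mI :: "(nat \<Rightarrow> real) \<Rightarrow> (nat \<Rightarrow> real \<Rightarrow> real^2) \<Rightarrow> nat \<Rightarrow> real \<Rightarrow> real" where
  "mI m a i t = m i * (norm (a i t))\<^sup>2"

definition totI :: "(nat \<Rightarrow> real) \<Rightarrow> (nat \<Rightarrow> real \<Rightarrow> real^2) \<Rightarrow> real \<Rightarrow> real" where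
  "totI m a t = mI m a 1 t + mI m a 2 t + mI m a 3 t"

text \<open>central angle at O opposite to vertex j: angle between a_(j+1) and a_(j+2)\<close>
definition alpha :: "(nat \<Rightarrow> real \<Rightarrow> real^2) \<Rightarrow> nat \<Rightarrow> real \<Rightarrow> real" where
  "alpha a j t = vang (a (nx j) t) (a (nx (nx j)) t)"

text \<open>signed area of the triangle P1 P2 P3 (positive iff counterclockwise)\<close>
definition sarea :: "(nat \<Rightarrow> real \<Rightarrow> real^2) \<Rightarrow> real \<Rightarrow> real" where
  "sarea a t = cross2 (a 2 t - a 1 t) (a 3 t - a 1 t) / 2"

definition Cc :: "(nat \<Rightarrow> real) \<Rightarrow> (nat \<Rightarrow> real \<Rightarrow> real^2) \<Rightarrow> nat \<Rightarrow> real \<Rightarrow> real" where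
  "Cc m a i t = - m i * mI m a i t + m (nx i) * mI m a (nx i) t
               + m (nx (nx i)) * mI m a (nx (nx i)) t"

definition angmom :: "(nat \<Rightarrow> real) \<Rightarrow> (nat \<Rightarrow> real \<Rightarrow> real^2) \<Rightarrow> real \<Rightarrow> real" where
  "angmom m a t = (\<Sum>i\<in>{1,2,3}. m i * cross2 (a i t) (vector_derivative (a i) (at t)))"

end

theory Submission
  imports Defs
begin

text \<open>
  Write L_l = m_l (a_l x a_l') for the angular momentum of the l-th particle. Polar angles
  satisfy I_l phi_l' = L_l, and Omega = L_1 + L_2 + L_3. The centre-of-mass relation gives
  a_l x a_(l+1) = 2 m_(l+2) Delta, so for Delta > 0 consecutive position vectors are positively
  oriented and the central angle alpha_l equals phi_(l+2) - phi_(l+1) modulo 2 pi. Hence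
  I_k alpha_j' - I_j alpha_k' = I phi_i' - Omega, which is the splitting
  omega_i = omega_i^0 + Omega/I, and I_i I omega_i^0 = (I_j + I_k) L_i - I_i (L_j + L_k).
  The closed form of omega_i^0 is then a polynomial identity in the coordinates of positions and
  velocities, valid modulo the centre-of-mass relations sum m_l a_l = 0 = sum m_l a_l'.
\<close>

section \<open>Cyclic indexing of the vertices\<close>

lemma nx_simps [simp]: "nx 1 = 2" "nx (Suc 0) = 2" "nx 2 = 3" "nx 3 = 1"
  by (simp_all add: nx_def)

lemma nx_in [simp]: "nx l \<in> {1,2,3}"
  by (auto simp: nx_def)

lemma nx_nx_nx: "i \<in> {1,2,3} \<Longrightarrow> nx (nx (nx i)) = i"
  by auto

lemma sum_nx_cycle:
  fixes f :: "nat \<Rightarrow> 'a::ab_semigroup_add"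
  shows "i \<in> {1,2,3} \<Longrightarrow> f i + f (nx i) + f (nx (nx i)) = f 1 + f 2 + f 3"
  by (auto simp: ac_simps)

lemma prod_nx_cycle:
  fixes f :: "nat \<Rightarrow> 'a::ab_semigroup_mult"
  shows "i \<in> {1,2,3} \<Longrightarrow> f i * f (nx i) * f (nx (nx i)) = f 1 * f 2 * f 3"
  by (auto simp: ac_simps)

lemma Cc_conv_sum:
  "i \<in> {1,2,3} \<Longrightarrow>
    Cc m a i t = m 1 * mI m a 1 t + m 2 * mI m a 2 t + m 3 * mI m a 3 t - 2 * m i * mI m a i t"
  by (auto simp: Cc_def)

lemma totI_nx_cycle:
  "i \<in> {1,2,3} \<Longrightarrow> totI m a t = mI m a i t + mI m a (nx i) t + mI m a (nx (nx i)) t"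
  using sum_nx_cycle[of i "\<lambda>l. mI m a l t"] by (simp add: totI_def)

lemma norm_vec2_power2: "(norm (z::real^2))\<^sup>2 = (z$1)\<^sup>2 + (z$2)\<^sup>2"
  by (simp add: norm_eq_sqrt_inner inner_vec_def sum_2 power2_eq_square)

lemma inner_vec2: "(u::real^2) \<bullet> v = u$1 * v$1 + u$2 * v$2"
  by (simp add: inner_vec_def sum_2)

lemma cross2_self [simp]: "cross2 u u = 0"
  by (simp add: cross2_def)

lemma cross2_zero_left [simp]: "cross2 0 v = 0"
  by (simp add: cross2_def)

lemma cross2_diff_rotate: "cross2 (q - p) (r - p) = cross2 (r - q) (p - q)"
  by (simp add: cross2_def algebra_simps)

lemma sarea_nx_cycle:
  "i \<in> {1,2,3} \<Longrightarrow> cross2 (a (nx i) t - a i t) (a (nx (nx i)) t - a i t) = 2 * sarea a t"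
  by (auto simp: sarea_def) (metis cross2_diff_rotate)+

lemma polar_inner_cross2:
  fixes u v :: "real^2"
  assumes "u$1 = norm u * cos \<alpha>" "u$2 = norm u * sin \<alpha>"
    and "v$1 = norm v * cos \<beta>" "v$2 = norm v * sin \<beta>"
  shows "u \<bullet> v = norm u * norm v * cos (\<beta> - \<alpha>)"
    and "cross2 u v = norm u * norm v * sin (\<beta> - \<alpha>)"
  using assms by (simp_all add: inner_vec2 cross2_def cos_diff sin_diff algebra_simps)

lemma cross2_centred:
  fixes a1 a2 a3 :: "real^2"
  assumes "m1 + m2 + m3 = 1" and "m1 *\<^sub>R a1 + m2 *\<^sub>R a2 + m3 *\<^sub>R a3 = 0"
  shows "cross2 a1 a2 = m3 * cross2 (a2 - a1) (a3 - a1)"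
proof -
  have "m1 * a1$c + m2 * a2$c + m3 * a3$c = 0" for c
    using arg_cong[OF assms(2), of "\<lambda>z. z $ c"] by simp
  from this[of 1] this[of 2] show ?thesis
    using assms(1) unfolding cross2_def by (simp only: vector_minus_component) algebra
qed

text \<open>The identity lies in the ideal generated by the centre-of-mass relations, so the
  indices i, j, k need not be distinct.\<close>

lemma centred_triangle_identity:
  fixes m I L dI C :: "nat \<Rightarrow> real" and p v :: "nat \<Rightarrow> real^2" and i j k :: nat
  assumes msum: "m i + m j + m k = 1"
    and pc: "m i *\<^sub>R p i + m j *\<^sub>R p j + m k *\<^sub>R p k = 0"
    and vc: "m i *\<^sub>R v i + m j *\<^sub>R v j + m k *\<^sub>R v k = 0"
    and I: "\<And>l. l \<in> {i, j, k} \<Longrightarrow> I l = m l * (norm (p l))\<^sup>2"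
    and L: "\<And>l. l \<in> {i, j, k} \<Longrightarrow> L l = m l * cross2 (p l) (v l)"
    and dI: "\<And>l. l \<in> {i, j, k} \<Longrightarrow> dI l = 2 * m l * (p l \<bullet> v l)"
    and C: "\<And>l. l \<in> {i, j, k} \<Longrightarrow> C l = m i * I i + m j * I j + m k * I k - 2 * m l * I l"
  shows "4 * m i * m j * m k * cross2 (p j - p i) (p k - p i) * ((I j + I k) * L i - I i * (L j + L k))
    = (C k * I k - C j * I j) * dI i - I i * (C i + 2 * m j * I k) * dI j
      + I i * (C i + 2 * m k * I j) * dI k"
proof -
  have "m i * p i$c + m j * p j$c + m k * p k$c = 0"
    and "m i * v i$c + m j * v j$c + m k * v k$c = 0" for c
    using arg_cong[OF pc, of "\<lambda>z. z $ c"] arg_cong[OF vc, of "\<lambda>z. z $ c"] by simp_all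
  from this[of 1] this[of 2] msum show ?thesis
    by (simp add: C I L dI cross2_def norm_vec2_power2 inner_vec2) algebra
qed

section \<open>Derivatives of angles\<close>

lemma has_real_derivative_vec_nth:
  "(A has_vector_derivative V) F \<Longrightarrow> ((\<lambda>s. A s $ k) has_real_derivative V $ k) F"
  unfolding has_real_derivative_iff_has_vector_derivative
  by (rule bounded_linear.has_vector_derivative[OF bounded_linear_vec_nth])

lemma eventually_nhds_isCont:
  assumes "isCont f x" and "f x \<in> S" and "open S"
  shows "\<forall>\<^sub>F y in nhds x. f y \<in> S"
proof -
  have "(f \<longlongrightarrow> f x) (nhds x)"
    using assms(1) by (simp add: isCont_def tendsto_at_iff_tendsto_nhds)
  then show ?thesis using assms(2,3) topological_tendstoD by blast
qed

lemma polar_angle_has_derivative: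
  fixes A :: "real \<Rightarrow> real^2"
  assumes A: "(A has_vector_derivative V) (at t)" and nz: "A t \<noteq> 0"
    and polar: "\<forall>s. A s $ 1 = norm (A s) * cos (ph s) \<and> A s $ 2 = norm (A s) * sin (ph s)"
    and ph: "isCont ph t"
  shows "(ph has_real_derivative cross2 (A t) V / (norm (A t))\<^sup>2) (at t)"
proof -
  define f where "f s = cross2 (A t) (A s) / (A t \<bullet> A s)" for s
  have "\<forall>\<^sub>F s in nhds t. A s \<in> -{0}"
    by (rule eventually_nhds_isCont[OF has_vector_derivative_continuous[OF A]]) (use nz in auto)
  moreover have "\<forall>\<^sub>F s in nhds t. ph s \<in> {ph t - pi/2 <..< ph t + pi/2}"
    by (rule eventually_nhds_isCont[OF ph]) auto
  \<comment> \<open>near t the increment of ph stays in (-pi/2, pi/2), so arctan recovers it from A\<close>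
  ultimately have "\<forall>\<^sub>F s in nhds t. ph t + arctan (f s) = ph s"
  proof eventually_elim
    case (elim s)
    have "f s = tan (ph s - ph t)"
      using polar_inner_cross2[of "A t" "ph t" "A s" "ph s"] polar nz elim(1)
      by (simp add: f_def tan_def)
    then show ?case using elim(2) by (simp add: arctan_tan)
  qed
  moreover have f': "(f has_real_derivative cross2 (A t) V / (norm (A t))\<^sup>2) (at t)"
  proof -
    have cross: "((\<lambda>s. cross2 (A t) (A s)) has_real_derivative cross2 (A t) V) (at t)"
      unfolding cross2_def
      by (intro derivative_intros DERIV_cmult has_real_derivative_vec_nth[OF A])
    have inner: "((\<lambda>s. A t \<bullet> A s) has_real_derivative A t \<bullet> V) (at t)"
      unfolding has_real_derivative_iff_has_vector_derivative
      by (rule bounded_linear.has_vector_derivative[OF bounded_linear_inner_right A])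
    have "A t \<bullet> A t \<noteq> 0" using nz by simp
    from DERIV_divide[OF cross inner this] show ?thesis
      unfolding f_def by (simp add: nz power2_norm_eq_inner)
  qed
  moreover have "f t = 0" by (simp add: f_def)
  ultimately show ?thesis
    using DERIV_add[OF DERIV_const[of "ph t"] DERIV_chain2[OF DERIV_arctan f']]
      DERIV_cong_ev[OF refl _ refl] by fastforce
qed

lemma vang_polar:
  fixes u v :: "real^2"
  assumes "u \<noteq> 0" "v \<noteq> 0"
    and "u$1 = norm u * cos \<alpha>" "u$2 = norm u * sin \<alpha>"
    and "v$1 = norm v * cos \<beta>" "v$2 = norm v * sin \<beta>"
  shows "vang u v = arccos (cos (\<beta> - \<alpha>))"
  using assms by (simp add: vang_def polar_inner_cross2(1))

lemma arccos_cos_has_derivative: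
  assumes \<psi>: "(\<psi> has_real_derivative D) (at t)" and sin_pos: "sin (\<psi> t) > 0"
  shows "((\<lambda>s. arccos (cos (\<psi> s))) has_real_derivative D) (at t)"
proof -
  have "(cos (\<psi> t))\<^sup>2 < 1"
    using sin_pos by (simp add: cos_squared_eq)
  then have "-1 < cos (\<psi> t)" "cos (\<psi> t) < 1"
    by (auto simp: abs_square_less_1 abs_less_iff)
  moreover have "sqrt (1 - (cos (\<psi> t))\<^sup>2) = sin (\<psi> t)"
    using sin_pos by (simp add: sin_squared_eq[symmetric])
  ultimately have "((\<lambda>s. arccos (cos (\<psi> s))) has_real_derivative
      inverse (- sin (\<psi> t)) * (- sin (\<psi> t) * D)) (at t)"
    using DERIV_chain2[OF DERIV_arccos DERIV_chain2[OF DERIV_cos \<psi>]] by simp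
  then show ?thesis
    by (rule DERIV_cong) (use sin_pos in \<open>simp add: field_simps\<close>)
qed

section \<open>Centred motions of three particles\<close>

locale centred_motion =
  fixes m :: "nat \<Rightarrow> real" and a :: "nat \<Rightarrow> real \<Rightarrow> real^2" and phi :: "nat \<Rightarrow> real \<Rightarrow> real"
  assumes mpos: "\<forall>i\<in>{1,2,3}. m i > 0"
    and msum: "m 1 + m 2 + m 3 = 1"
    and com: "\<forall>s. m 1 *\<^sub>R a 1 s + m 2 *\<^sub>R a 2 s + m 3 *\<^sub>R a 3 s = 0"
    and smooth: "\<forall>i\<in>{1,2,3}. \<forall>s. a i differentiable (at s)"
    and polar: "\<forall>i\<in>{1,2,3}. \<forall>s. a i s $ 1 = norm (a i s) * cos (phi i s)
                                   \<and> a i s $ 2 = norm (a i s) * sin (phi i s)"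
begin

abbreviation vel :: "nat \<Rightarrow> real \<Rightarrow> real^2"
  where "vel l t \<equiv> vector_derivative (a l) (at t)"

abbreviation amom :: "nat \<Rightarrow> real \<Rightarrow> real"
  where "amom l t \<equiv> m l * cross2 (a l t) (vel l t)"

lemma polar_at:
  assumes "l \<in> {1,2,3}"
  shows "a l s $ 1 = norm (a l s) * cos (phi l s)" and "a l s $ 2 = norm (a l s) * sin (phi l s)"
  using polar assms by blast+

lemma has_vector_derivative_vel: "l \<in> {1,2,3} \<Longrightarrow> (a l has_vector_derivative vel l t) (at t)"
  using smooth vector_derivative_works by blast

lemma vel_centred: "m 1 *\<^sub>R vel 1 t + m 2 *\<^sub>R vel 2 t + m 3 *\<^sub>R vel 3 t = 0"
proof -
  have "((\<lambda>s. m 1 *\<^sub>R a 1 s + m 2 *\<^sub>R a 2 s + m 3 *\<^sub>R a 3 s) has_vector_derivative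
      m 1 *\<^sub>R vel 1 t + m 2 *\<^sub>R vel 2 t + m 3 *\<^sub>R vel 3 t) (at t)"
    by (auto intro!: derivative_eq_intros has_vector_derivative_vel)
  moreover have "((\<lambda>s. m 1 *\<^sub>R a 1 s + m 2 *\<^sub>R a 2 s + m 3 *\<^sub>R a 3 s) has_vector_derivative 0) (at t)"
    using com by simp
  ultimately show ?thesis
    using vector_derivative_unique_at by blast
qed

lemma cross2_consecutive:
  assumes "l \<in> {1,2,3}"
  shows "cross2 (a l t) (a (nx l) t) = 2 * m (nx (nx l)) * sarea a t"
proof -
  have "m l + m (nx l) + m (nx (nx l)) = 1"
    using sum_nx_cycle[OF assms, of m] msum by simp
  moreover have "m l *\<^sub>R a l t + m (nx l) *\<^sub>R a (nx l) t + m (nx (nx l)) *\<^sub>R a (nx (nx l)) t = 0"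
    using sum_nx_cycle[OF assms, of "\<lambda>l. m l *\<^sub>R a l t"] com by simp
  ultimately show ?thesis
    using cross2_centred sarea_nx_cycle[OF assms] by simp
qed

lemma position_nonzero:
  assumes "sarea a t \<noteq> 0" and "l \<in> {1,2,3}"
  shows "a l t \<noteq> 0"
proof
  assume "a l t = 0"
  then have "2 * m (nx (nx l)) * sarea a t = 0"
    using cross2_consecutive[OF assms(2), of t] by simp
  then show False
    using assms(1) mpos nx_in[of "nx l"] by auto
qed

lemma eventually_position_nonzero:
  assumes "sarea a t \<noteq> 0" and "l \<in> {1,2,3}"
  shows "\<forall>\<^sub>F s in nhds t. a l s \<noteq> 0"
proof -
  have "a l differentiable (at t)"
    using smooth assms(2) by blast
  then have "isCont (a l) t"
    by (rule differentiable_imp_continuous_within)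
  then have "\<forall>\<^sub>F s in nhds t. a l s \<in> -{0}"
    by (rule eventually_nhds_isCont) (use position_nonzero[OF assms] in auto)
  then show ?thesis by simp
qed

lemma phi_has_derivative:
  assumes "l \<in> {1,2,3}" and "isCont (phi l) t" and "sarea a t \<noteq> 0"
  shows "(phi l has_real_derivative amom l t / mI m a l t) (at t)"
proof -
  have "(phi l has_real_derivative cross2 (a l t) (vel l t) / (norm (a l t))\<^sup>2) (at t)"
    using polar_angle_has_derivative[OF has_vector_derivative_vel position_nonzero]
      polar_at assms by blast
  moreover have "m l > 0"
    using mpos assms(1) by blast
  ultimately show ?thesis
    by (simp add: mI_def)
qed

lemma deriv_phi:
  assumes "l \<in> {1,2,3}" and "isCont (phi l) t" and "sarea a t \<noteq> 0"
  shows "deriv (phi l) t = amom l t / mI m a l t"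
  by (rule DERIV_imp_deriv[OF phi_has_derivative[OF assms]])

lemma deriv_mI:
  assumes "l \<in> {1,2,3}"
  shows "deriv (mI m a l) t = 2 * m l * (a l t \<bullet> vel l t)"
proof -
  have "mI m a l = (\<lambda>s. m l * ((a l s $ 1)\<^sup>2 + (a l s $ 2)\<^sup>2))"
    by (simp add: mI_def norm_vec2_power2 fun_eq_iff)
  moreover note has_real_derivative_vec_nth[OF has_vector_derivative_vel[OF assms]]
  ultimately have "(mI m a l has_real_derivative 2 * m l * (a l t \<bullet> vel l t)) (at t)"
    by (auto intro!: derivative_eq_intros simp: inner_vec2 algebra_simps)
  then show ?thesis by (rule DERIV_imp_deriv)
qed

lemma deriv_alpha:
  assumes l: "l \<in> {1,2,3}" and cont: "\<forall>l\<in>{1,2,3}. isCont (phi l) t" and pos: "sarea a t > 0"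
  defines "j \<equiv> nx l" and "k \<equiv> nx (nx l)"
  shows "deriv (alpha a l) t = deriv (phi k) t - deriv (phi j) t"
proof -
  have jk: "j \<in> {1,2,3}" "k \<in> {1,2,3}"
    unfolding j_def k_def by (rule nx_in)+
  have near: "\<forall>\<^sub>F s in nhds t. a i s \<noteq> 0" if "i \<in> {1,2,3}" for i
    using eventually_position_nonzero pos that by simp
  have ev: "\<forall>\<^sub>F s in nhds t. alpha a l s = arccos (cos (phi k s - phi j s))"
    using near[OF jk(1)] near[OF jk(2)]
  proof eventually_elim
    case (elim s)
    show ?case
      using vang_polar[OF elim polar_at[OF jk(1)] polar_at[OF jk(2)]]
      by (simp add: alpha_def j_def k_def)
  qed
  have sin_pos: "sin (phi k t - phi j t) > 0"
  proof -
    have "m l > 0" using mpos l by blast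
    then have "cross2 (a j t) (a k t) > 0"
      using cross2_consecutive[OF jk(1), of t] pos l by (simp add: j_def k_def nx_nx_nx)
    then have "0 < norm (a j t) * norm (a k t) * sin (phi k t - phi j t)"
      using polar_inner_cross2(2)[OF polar_at[OF jk(1)] polar_at[OF jk(2)]] by simp
    moreover have "0 < norm (a j t) * norm (a k t)"
      using position_nonzero jk pos by simp
    ultimately show ?thesis
      by (rule zero_less_mult_pos)
  qed
  have "((\<lambda>s. phi k s - phi j s) has_real_derivative deriv (phi k) t - deriv (phi j) t) (at t)"
  proof -
    have "isCont (phi j) t" "isCont (phi k) t" "sarea a t \<noteq> 0"
      using cont jk pos by auto
    then have "(phi j has_real_derivative deriv (phi j) t) (at t)"
      and "(phi k has_real_derivative deriv (phi k) t) (at t)"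
      using phi_has_derivative deriv_phi jk by simp_all
    then show ?thesis
      by (intro DERIV_diff)
  qed
  from arccos_cos_has_derivative[OF this sin_pos]
  have "(alpha a l has_real_derivative deriv (phi k) t - deriv (phi j) t) (at t)"
    using DERIV_cong_ev[OF refl ev refl] by simp
  then show ?thesis
    by (rule DERIV_imp_deriv)
qed

lemma mI_pos:
  assumes "sarea a t \<noteq> 0" and "l \<in> {1,2,3}"
  shows "mI m a l t > 0"
proof -
  have "m l > 0" using mpos assms(2) by blast
  then show ?thesis using position_nonzero[OF assms] by (simp add: mI_def)
qed

lemma amom_combination_identity:
  assumes i: "i \<in> {1,2,3}"
  defines "j \<equiv> nx i" and "k \<equiv> nx (nx i)"
  shows "8 * m 1 * m 2 * m 3 * sarea a t
      * ((mI m a j t + mI m a k t) * amom i t - mI m a i t * (amom j t + amom k t))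
    = (Cc m a k t * mI m a k t - Cc m a j t * mI m a j t) * deriv (mI m a i) t
      - mI m a i t * (Cc m a i t + 2 * m j * mI m a k t) * deriv (mI m a j) t
      + mI m a i t * (Cc m a i t + 2 * m k * mI m a j t) * deriv (mI m a k) t"
    (is "?D * ?N = ?R")
proof -
  have ijk: "l \<in> {1,2,3}" if "l \<in> {i, j, k}" for l
    using that i by (auto simp: j_def k_def)
  have "4 * m i * m j * m k * cross2 (a j t - a i t) (a k t - a i t) = ?D"
    using prod_nx_cycle[OF i, of m] sarea_nx_cycle[OF i, of a t] by (simp add: j_def k_def)
  moreover have "4 * m i * m j * m k * cross2 (a j t - a i t) (a k t - a i t) * ?N = ?R"
  proof (rule centred_triangle_identity[where p = "\<lambda>l. a l t" and v = "\<lambda>l. vel l t"])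
    show "m i + m j + m k = 1"
      using sum_nx_cycle[OF i, of m] msum by (simp add: j_def k_def)
    show "m i *\<^sub>R a i t + m j *\<^sub>R a j t + m k *\<^sub>R a k t = 0"
      using sum_nx_cycle[OF i, of "\<lambda>l. m l *\<^sub>R a l t"] com by (simp add: j_def k_def)
    show "m i *\<^sub>R vel i t + m j *\<^sub>R vel j t + m k *\<^sub>R vel k t = 0"
      using sum_nx_cycle[OF i, of "\<lambda>l. m l *\<^sub>R vel l t"] vel_centred by (simp add: j_def k_def)
    show "mI m a l t = m l * (norm (a l t))\<^sup>2" for l
      by (simp add: mI_def)
    show "deriv (mI m a l) t = 2 * m l * (a l t \<bullet> vel l t)" if "l \<in> {i, j, k}" for l
      using deriv_mI ijk[OF that] .
    show "Cc m a l t = m i * mI m a i t + m j * mI m a j t + m k * mI m a k t - 2 * m l * mI m a l t"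
      if "l \<in> {i, j, k}" for l
      using Cc_conv_sum[OF ijk[OF that]] sum_nx_cycle[OF i, of "\<lambda>l. m l * mI m a l t"]
      by (simp add: j_def k_def)
  qed simp
  ultimately show ?thesis by (simp only:)
qed

lemma angmom_nx_cycle:
  "i \<in> {1,2,3} \<Longrightarrow> angmom m a t = amom i t + amom (nx i) t + amom (nx (nx i)) t"
  using sum_nx_cycle[of i "\<lambda>l. amom l t"] by (simp add: angmom_def)

lemma deriv_alpha_combination:
  assumes i: "i \<in> {1,2,3}" and cont: "\<forall>l\<in>{1,2,3}. isCont (phi l) t" and pos: "sarea a t > 0"
  defines "j \<equiv> nx i" and "k \<equiv> nx (nx i)"
  shows "mI m a k t * deriv (alpha a j) t - mI m a j t * deriv (alpha a k) t
    = ((mI m a j t + mI m a k t) * amom i t - mI m a i t * (amom j t + amom k t)) / mI m a i t"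
proof -
  have jk: "j \<in> {1,2,3}" "k \<in> {1,2,3}"
    unfolding j_def k_def by (rule nx_in)+
  have I: "mI m a l t > 0" if "l \<in> {1,2,3}" for l
    using mI_pos[OF _ that] pos by simp
  have w: "deriv (phi l) t = amom l t / mI m a l t" if "l \<in> {1,2,3}" for l
    using deriv_phi[OF that bspec[OF cont that]] pos by simp
  have "deriv (alpha a j) t = deriv (phi i) t - deriv (phi k) t"
    and "deriv (alpha a k) t = deriv (phi j) t - deriv (phi i) t"
    using deriv_alpha[OF jk(1) cont pos] deriv_alpha[OF jk(2) cont pos] nx_nx_nx[OF i]
    by (simp_all add: j_def k_def)
  then show ?thesis
    unfolding w[OF i] w[OF jk(1)] w[OF jk(2)]
    using I[OF i] I[OF jk(1)] I[OF jk(2)] by (simp add: field_simps)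
qed

lemma angular_velocity_split:
  assumes i: "i \<in> {1,2,3}" and cont: "\<forall>l\<in>{1,2,3}. isCont (phi l) t" and pos: "sarea a t > 0"
  defines "j \<equiv> nx i" and "k \<equiv> nx (nx i)"
  shows "deriv (phi i) t
    = (mI m a k t * deriv (alpha a j) t - mI m a j t * deriv (alpha a k) t) / totI m a t
      + angmom m a t / totI m a t"
proof -
  have jk: "j \<in> {1,2,3}" "k \<in> {1,2,3}"
    unfolding j_def k_def by (rule nx_in)+
  have I: "mI m a i t > 0" "mI m a j t > 0" "mI m a k t > 0"
    using mI_pos pos i jk by simp_all
  have "(mI m a k t * deriv (alpha a j) t - mI m a j t * deriv (alpha a k) t) + angmom m a t
      = ((mI m a j t + mI m a k t) * amom i t - mI m a i t * (amom j t + amom k t)) / mI m a i t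
        + (amom i t + amom j t + amom k t)"
    using deriv_alpha_combination[OF i cont pos] angmom_nx_cycle[OF i] by (simp add: j_def k_def)
  also have "\<dots> = totI m a t * (amom i t / mI m a i t)"
    using I totI_nx_cycle[OF i] by (simp add: j_def k_def field_simps)
  also have "amom i t / mI m a i t = deriv (phi i) t"
    using deriv_phi[OF i bspec[OF cont i]] pos by simp
  finally show ?thesis
    using I totI_nx_cycle[OF i] unfolding j_def k_def by (simp add: add_divide_distrib[symmetric])
qed

lemma omega0_formula:
  assumes i: "i \<in> {1,2,3}" and cont: "\<forall>l\<in>{1,2,3}. isCont (phi l) t" and pos: "sarea a t > 0"
  defines "j \<equiv> nx i" and "k \<equiv> nx (nx i)"
  shows "(mI m a k t * deriv (alpha a j) t - mI m a j t * deriv (alpha a k) t) / totI m a t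
    = ((Cc m a k t * mI m a k t - Cc m a j t * mI m a j t) * deriv (mI m a i) t / mI m a i t
        - (Cc m a i t + 2 * m j * mI m a k t) * deriv (mI m a j) t
        + (Cc m a i t + 2 * m k * mI m a j t) * deriv (mI m a k) t)
      / (8 * m 1 * m 2 * m 3 * sarea a t * totI m a t)"
    (is "?X / ?I = ?R / (?D * ?I)")
proof -
  define N where
    "N = (mI m a j t + mI m a k t) * amom i t - mI m a i t * (amom j t + amom k t)"
  have jk: "j \<in> {1,2,3}" "k \<in> {1,2,3}"
    unfolding j_def k_def by (rule nx_in)+
  have I: "mI m a i t > 0" "mI m a j t > 0" "mI m a k t > 0"
    using mI_pos pos i jk by simp_all
  then have "?I > 0"
    using totI_nx_cycle[OF i] unfolding j_def k_def by simp
  moreover have "?D \<noteq> 0"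
    using mpos pos by simp
  moreover have "?X = N / mI m a i t"
    using deriv_alpha_combination[OF i cont pos] by (simp add: N_def j_def k_def)
  moreover have "?R = ?D * N / mI m a i t"
    using amom_combination_identity[OF i, of t] I(1)
    by (simp add: N_def j_def k_def field_simps)
  ultimately show ?thesis
    by simp
qed

end

theorem theoremC1:
  fixes m :: "nat \<Rightarrow> real" and a :: "nat \<Rightarrow> real \<Rightarrow> real^2"
    and phi :: "nat \<Rightarrow> real \<Rightarrow> real" and t :: real
  assumes mpos: "\<forall>i\<in>{1,2,3}. m i > 0"
    and msum: "m 1 + m 2 + m 3 = 1"
    and com: "\<forall>s. m 1 *\<^sub>R a 1 s + m 2 *\<^sub>R a 2 s + m 3 *\<^sub>R a 3 s = 0"
    and smooth: "\<forall>i\<in>{1,2,3}. \<forall>s. a i differentiable (at s)"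
    and polar: "\<forall>i\<in>{1,2,3}. \<forall>s. a i s $ 1 = norm (a i s) * cos (phi i s)
                                   \<and> a i s $ 2 = norm (a i s) * sin (phi i s)"
    and phicont: "\<forall>i\<in>{1,2,3}. isCont (phi i) t"
    and nondeg: "sarea a t > 0"
  shows "\<forall>i\<in>{1,2,3}.
     (let j = nx i; k = nx (nx i); I = totI m a t; \<Omega> = angmom m a t;
          Ii = mI m a i t; Ij = mI m a j t; Ik = mI m a k t;
          dIi = deriv (mI m a i) t; dIj = deriv (mI m a j) t; dIk = deriv (mI m a k) t;
          Ci = Cc m a i t; Cj = Cc m a j t; Ck = Cc m a k t;
          w0 = (Ik * deriv (alpha a j) t - Ij * deriv (alpha a k) t) / I
      in deriv (phi i) t = w0 + \<Omega> / I
       \<and> w0 = ((Ck * Ik - Cj * Ij) * dIi / Ii - (Ci + 2 * m j * Ik) * dIj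
               + (Ci + 2 * m k * Ij) * dIk)
              / (8 * m 1 * m 2 * m 3 * sarea a t * I))"
proof -
  interpret centred_motion m a phi
    using mpos msum com smooth polar by unfold_locales
  show ?thesis
    using angular_velocity_split[OF _ phicont nondeg] omega0_formula[OF _ phicont nondeg]
    by (simp add: Let_def)
qed

end
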